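(* Let $\Gamma_0$ be a directed Eulerian multi-triangulation of a connected closed $2$-dimensional surface $M$ whose underlying graph is $3$-colorable, and fix a proper $3$-coloring of the underlying graph. Then: (1) if there is a directed walk of length $m$ in $\Gamma_0$ from a vertex $v$ to a vertex $w$, then $v$ and $w$ have the same color if and only if $m$ is divisible by $3$; (2) every closed directed walk in $\Gamma_0$ has length divisible by $3$.
   Context: Digraphs are finite, without loops, possibly with multiple directed edges. An Eulerian digraph is a connected digraph in which every vertex has equal indegree and outdegree. A directed Eulerian embedding is a $2$-cell embedding of an Eulerian digraph in a surface such that the boundary of each face is a directed closed walk (equivalently, incoming and outgoing edges alternate in the rotation around each vertex). A multi-triangulation of $M$ is a closed $2$-cell embedding (every face homeomorphic to a closed disk) of a connected finite graph (without loops, multiple edges allowed) in $M$ all of whose faces are triangles. A directed Eulerian multi-triangulation is a directed Eulerian embedding whose underlying graph is a multi-triangulation. The length of a walk is the number of edges traversed, counted with multiplicity. *)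

theory Defs
  imports Main
begin

text \<open>
Digraph: vertex set V, edge set E (multi-edges allowed since edges are abstract),
each edge e has tail src e and head dst e.

A 2-cell embedding of a connected graph in a connected closed surface is encoded
combinatorially as a graph-encoded map (generalized map / gem): a finite set F of flags
with three fixed-point-free involutions t0, t1, t2 (t0 and t2 commuting, t0 t2 fixed-point
free) acting transitively on F; vert and edg assign to each flag its vertex and edge.
Vertices correspond to the orbits of the group generated by t1, t2, edges to the orbits
of the group generated by t0, t2, faces to the orbits of the group generated by t0, t1.
\<close>

definition gen_rel :: "'f set \<Rightarrow> ('f \<Rightarrow> 'f) list \<Rightarrow> ('f \<times> 'f) set" where
  "gen_rel F ts = {(x, t x) | x t. x \<in> F \<and> t \<in> set ts}"

definition digraph :: "'v set \<Rightarrow> 'e set \<Rightarrow> ('e \<Rightarrow> 'v) \<Rightarrow> ('e \<Rightarrow> 'v) \<Rightarrow> bool" where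
  "digraph V E src dst \<longleftrightarrow> finite V \<and> finite E \<and>
     (\<forall>e\<in>E. src e \<in> V \<and> dst e \<in> V \<and> src e \<noteq> dst e)"

definition eulerian_digraph :: "'v set \<Rightarrow> 'e set \<Rightarrow> ('e \<Rightarrow> 'v) \<Rightarrow> ('e \<Rightarrow> 'v) \<Rightarrow> bool" where
  "eulerian_digraph V E src dst \<longleftrightarrow> digraph V E src dst \<and> V \<noteq> {} \<and>
     (\<forall>v\<in>V. \<forall>w\<in>V. (v, w) \<in> ({(src e, dst e) | e. e \<in> E} \<union> {(dst e, src e) | e. e \<in> E})\<^sup>*) \<and>
     (\<forall>v\<in>V. card {e\<in>E. src e = v} = card {e\<in>E. dst e = v})"

definition gem_embedding ::
  "'v set \<Rightarrow> 'e set \<Rightarrow> ('e \<Rightarrow> 'v) \<Rightarrow> ('e \<Rightarrow> 'v) \<Rightarrow>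
   'f set \<Rightarrow> ('f \<Rightarrow> 'f) \<Rightarrow> ('f \<Rightarrow> 'f) \<Rightarrow> ('f \<Rightarrow> 'f) \<Rightarrow> ('f \<Rightarrow> 'v) \<Rightarrow> ('f \<Rightarrow> 'e) \<Rightarrow> bool" where
  "gem_embedding V E src dst F t0 t1 t2 vert edg \<longleftrightarrow>
     digraph V E src dst \<and> finite F \<and> F \<noteq> {} \<and>
     (\<forall>x\<in>F. t0 x \<in> F \<and> t0 (t0 x) = x \<and> t0 x \<noteq> x) \<and>
     (\<forall>x\<in>F. t1 x \<in> F \<and> t1 (t1 x) = x \<and> t1 x \<noteq> x) \<and>
     (\<forall>x\<in>F. t2 x \<in> F \<and> t2 (t2 x) = x \<and> t2 x \<noteq> x) \<and>
     (\<forall>x\<in>F. t0 (t2 x) = t2 (t0 x) \<and> t0 (t2 x) \<noteq> x) \<and>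
     (\<forall>x\<in>F. \<forall>y\<in>F. (x, y) \<in> (gen_rel F [t0, t1, t2])\<^sup>*) \<and>
     vert ` F = V \<and>
     (\<forall>x\<in>F. \<forall>y\<in>F. vert x = vert y \<longleftrightarrow> (x, y) \<in> (gen_rel F [t1, t2])\<^sup>*) \<and>
     edg ` F = E \<and>
     (\<forall>x\<in>F. \<forall>y\<in>F. edg x = edg y \<longleftrightarrow> y \<in> {x, t0 x, t2 x, t0 (t2 x)}) \<and>
     (\<forall>x\<in>F. (src (edg x) = vert x \<and> dst (edg x) = vert (t0 x)) \<or>
             (src (edg x) = vert (t0 x) \<and> dst (edg x) = vert x))"

text \<open>Multi-triangulation: every face (t0,t1-orbit) is a triangle with three distinct
  vertices, i.e. a closed disk bounded by a 3-cycle.\<close>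
definition gem_multi_triangulation ::
  "'f set \<Rightarrow> ('f \<Rightarrow> 'f) \<Rightarrow> ('f \<Rightarrow> 'f) \<Rightarrow> ('f \<Rightarrow> 'v) \<Rightarrow> bool" where
  "gem_multi_triangulation F t0 t1 vert \<longleftrightarrow>
     (\<forall>x\<in>F. ((t1 \<circ> t0) ^^ 3) x = x \<and>
        vert x \<noteq> vert (t0 x) \<and> vert x \<noteq> vert (t0 (t1 (t0 x))) \<and>
        vert (t0 x) \<noteq> vert (t0 (t1 (t0 x))))"

text \<open>Directed Eulerian embedding: each face boundary is a directed closed walk, i.e.
  consecutive edges along the boundary walk of a face are traversed in the same
  direction relative to their orientation.\<close>
definition directed_faces ::
  "('e \<Rightarrow> 'v) \<Rightarrow> 'f set \<Rightarrow> ('f \<Rightarrow> 'f) \<Rightarrow> ('f \<Rightarrow> 'f) \<Rightarrow> ('f \<Rightarrow> 'v) \<Rightarrow> ('f \<Rightarrow> 'e) \<Rightarrow> bool" where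
  "directed_faces src F t0 t1 vert edg \<longleftrightarrow>
     (\<forall>x\<in>F. (src (edg x) = vert x) \<longleftrightarrow> (src (edg (t1 (t0 x))) = vert (t1 (t0 x))))"

definition directed_eulerian_multi_triangulation ::
  "'v set \<Rightarrow> 'e set \<Rightarrow> ('e \<Rightarrow> 'v) \<Rightarrow> ('e \<Rightarrow> 'v) \<Rightarrow>
   'f set \<Rightarrow> ('f \<Rightarrow> 'f) \<Rightarrow> ('f \<Rightarrow> 'f) \<Rightarrow> ('f \<Rightarrow> 'f) \<Rightarrow> ('f \<Rightarrow> 'v) \<Rightarrow> ('f \<Rightarrow> 'e) \<Rightarrow> bool" where
  "directed_eulerian_multi_triangulation V E src dst F t0 t1 t2 vert edg \<longleftrightarrow>
     eulerian_digraph V E src dst \<and>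
     gem_embedding V E src dst F t0 t1 t2 vert edg \<and>
     gem_multi_triangulation F t0 t1 vert \<and>
     directed_faces src F t0 t1 vert edg"

definition proper_3_coloring :: "'v set \<Rightarrow> 'e set \<Rightarrow> ('e \<Rightarrow> 'v) \<Rightarrow> ('e \<Rightarrow> 'v) \<Rightarrow> ('v \<Rightarrow> nat) \<Rightarrow> bool" where
  "proper_3_coloring V E src dst col \<longleftrightarrow>
     (\<forall>v\<in>V. col v < 3) \<and> (\<forall>e\<in>E. col (src e) \<noteq> col (dst e))"

fun dwalk :: "'v set \<Rightarrow> 'e set \<Rightarrow> ('e \<Rightarrow> 'v) \<Rightarrow> ('e \<Rightarrow> 'v) \<Rightarrow> 'v \<Rightarrow> 'e list \<Rightarrow> 'v \<Rightarrow> bool" where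
  "dwalk V E src dst v [] w \<longleftrightarrow> v \<in> V \<and> v = w"
| "dwalk V E src dst v (e # es) w \<longleftrightarrow> e \<in> E \<and> src e = v \<and> dwalk V E src dst (dst e) es w"

end

theory Submission
  imports Defs
begin

text \<open>Give every edge the shift of colours from its tail to its head, an element
  of \<open>{1, 2}\<close> modulo 3. In a directed face the three vertices carry the three distinct
  colours and the boundary is a directed 3-cycle, so consecutive boundary edges have the same
  shift. Since the edges of the flag graph (changing vertex, edge or face) either keep the edge
  or pass to the next edge of a face boundary, connectedness of the surface makes the shift one
  constant \<open>k \<in> {1, 2}\<close>. Along a directed walk of length \<open>m\<close> the colour therefore
  changes by \<open>k m\<close> modulo 3, which vanishes iff \<open>3\<close> divides \<open>m\<close>.\<close>

definition color_shift :: "('v \<Rightarrow> nat) \<Rightarrow> ('e \<Rightarrow> 'v) \<Rightarrow> ('e \<Rightarrow> 'v) \<Rightarrow> 'e \<Rightarrow> int" where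
  "color_shift col src dst e = (int (col (dst e)) - int (col (src e))) mod 3"

lemma distinct3_mod3_steps_eq:
  fixes a b c :: nat
  assumes "a < 3" "b < 3" "c < 3" "a \<noteq> b" "b \<noteq> c" "c \<noteq> a"
  shows "(int b - int a) mod 3 = (int c - int b) mod 3"
    and "(int a - int b) mod 3 = (int b - int c) mod 3"
  using assms by (auto simp: less_Suc_eq numeral_3_eq_3)

lemma gen_rel_rtrancl_invariant:
  assumes "\<And>x t. x \<in> F \<Longrightarrow> t \<in> set ts \<Longrightarrow> f (t x) = f x"
    and "(x, y) \<in> (gen_rel F ts)\<^sup>*"
  shows "f y = f x"
  using assms(2) by induction (auto simp: gen_rel_def assms(1))

lemma dwalk_endpoints_in:
  assumes "digraph V E src dst" "dwalk V E src dst v es w"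
  shows "v \<in> V" "w \<in> V"
  using assms(2) by (induction es arbitrary: v) (use assms(1) in \<open>auto simp: digraph_def\<close>)

lemma dwalk_color_shift:
  assumes "\<forall>e\<in>E. color_shift col src dst e = k" and "dwalk V E src dst v es w"
  shows "(int (col w) - int (col v)) mod 3 = (k * int (length es)) mod 3"
  using assms(2)
proof (induction es arbitrary: v)
  case Nil
  then show ?case by simp
next
  case (Cons e es)
  then have "e \<in> E" "src e = v" and "dwalk V E src dst (dst e) es w" by auto
  then have "(int (col w) - int (col (dst e))) mod 3 = (k * int (length es)) mod 3"
    and "(int (col (dst e)) - int (col v)) mod 3 = k"
    using Cons.IH assms(1) by (auto simp: color_shift_def)
  then have "(int (col w) - int (col (dst e)) + (int (col (dst e)) - int (col v))) mod 3
      = (k * int (length es) + k) mod 3"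
    by (metis mod_add_eq mod_mod_trivial)
  then show ?case by (simp add: algebra_simps)
qed

lemma dwalk_same_color_iff:
  assumes "digraph V E src dst" "proper_3_coloring V E src dst col"
    and "\<forall>e\<in>E. color_shift col src dst e = k" "k \<in> {1, 2}"
    and "dwalk V E src dst v es w"
  shows "col v = col w \<longleftrightarrow> 3 dvd length es"
proof -
  have "col v < 3" "col w < 3"
    using dwalk_endpoints_in[OF assms(1,5)] assms(2) by (auto simp: proper_3_coloring_def)
  then have "col v = col w \<longleftrightarrow> (int (col w) - int (col v)) mod 3 = 0"
    by (auto simp: less_Suc_eq numeral_3_eq_3)
  also have "\<dots> \<longleftrightarrow> (k * int (length es)) mod 3 = 0"
    using dwalk_color_shift[OF assms(3,5)] by simp
  also have "\<dots> \<longleftrightarrow> 3 dvd length es"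
    using assms(4) by (simp only: insert_iff empty_iff) presburger
  finally show ?thesis .
qed

locale colored_directed_triangulation =
  fixes V :: "'v set" and E :: "'e set" and src dst :: "'e \<Rightarrow> 'v"
    and F :: "'f set" and t0 t1 t2 :: "'f \<Rightarrow> 'f" and vert :: "'f \<Rightarrow> 'v" and edg :: "'f \<Rightarrow> 'e"
    and col :: "'v \<Rightarrow> nat"
  assumes triangulation: "directed_eulerian_multi_triangulation V E src dst F t0 t1 t2 vert edg"
    and coloring: "proper_3_coloring V E src dst col"
begin

abbreviation shift :: "'e \<Rightarrow> int" where
  "shift \<equiv> color_shift col src dst"

lemma gem: "gem_embedding V E src dst F t0 t1 t2 vert edg"
  using triangulation by (simp add: directed_eulerian_multi_triangulation_def)

lemma digraph: "digraph V E src dst"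
  using gem by (simp add: gem_embedding_def)

lemma flag_closed: "x \<in> F \<Longrightarrow> t0 x \<in> F \<and> t1 x \<in> F \<and> t2 x \<in> F"
  using gem by (simp add: gem_embedding_def)

lemma t0_t0: "x \<in> F \<Longrightarrow> t0 (t0 x) = x"
  using gem by (simp add: gem_embedding_def)

lemma t1_t1: "x \<in> F \<Longrightarrow> t1 (t1 x) = x"
  using gem by (simp add: gem_embedding_def)

lemma edg_in_E: "x \<in> F \<Longrightarrow> edg x \<in> E"
  using gem by (auto simp: gem_embedding_def)

lemma vert_in_V: "x \<in> F \<Longrightarrow> vert x \<in> V"
  using gem by (auto simp: gem_embedding_def)

lemma vert_t1: "x \<in> F \<Longrightarrow> vert (t1 x) = vert x"
proof -
  assume x: "x \<in> F"
  then have "(x, t1 x) \<in> (gen_rel F [t1, t2])\<^sup>*"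
    by (auto simp: gen_rel_def)
  then show ?thesis
    using gem x flag_closed[OF x] unfolding gem_embedding_def by metis
qed

lemma edg_t0: "x \<in> F \<Longrightarrow> edg (t0 x) = edg x"
  and edg_t2: "x \<in> F \<Longrightarrow> edg (t2 x) = edg x"
  using gem flag_closed unfolding gem_embedding_def by (metis insertI1 insertI2)+

lemma edg_ends:
  "x \<in> F \<Longrightarrow> (src (edg x) = vert x \<and> dst (edg x) = vert (t0 x)) \<or>
               (src (edg x) = vert (t0 x) \<and> dst (edg x) = vert x)"
  using gem by (simp add: gem_embedding_def)

lemma color_lt_3: "x \<in> F \<Longrightarrow> col (vert x) < 3"
  using coloring vert_in_V by (simp add: proper_3_coloring_def)

lemma color_t0_neq: "x \<in> F \<Longrightarrow> col (vert (t0 x)) \<noteq> col (vert x)"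
  using coloring edg_in_E edg_ends unfolding proper_3_coloring_def by metis

lemma shift_edg_flag:
  "x \<in> F \<Longrightarrow> shift (edg x) =
     (if src (edg x) = vert x then (int (col (vert (t0 x))) - int (col (vert x))) mod 3
      else (int (col (vert x)) - int (col (vert (t0 x)))) mod 3)"
  using edg_ends[of x] by (auto simp: color_shift_def)

lemma triangle_closes:
  assumes "x \<in> F"
  shows "vert (t0 (t1 (t0 (t1 (t0 x))))) = vert x"
proof -
  have "((t1 \<circ> t0) ^^ 3) x = x"
    using triangulation assms
    by (simp add: directed_eulerian_multi_triangulation_def gem_multi_triangulation_def)
  then have "t1 (t0 (t1 (t0 (t1 (t0 x))))) = x"
    by (simp add: numeral_3_eq_3)
  then have "t0 (t1 (t0 (t1 (t0 x)))) = t1 x"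
    using t1_t1 flag_closed assms by metis
  then show ?thesis
    using vert_t1 assms by simp
qed

lemma shift_next_on_face: "x \<in> F \<Longrightarrow> shift (edg (t1 (t0 x))) = shift (edg x)"
proof -
  assume x: "x \<in> F"
  define y where "y = t1 (t0 x)"
  have y: "y \<in> F" "t1 (t0 y) \<in> F"
    using x flag_closed by (auto simp: y_def)
  have vert_y: "vert y = vert (t0 x)"
    using vert_t1 flag_closed x by (simp add: y_def)
  have same_direction: "src (edg x) = vert x \<longleftrightarrow> src (edg y) = vert y"
    using triangulation x
    by (simp add: directed_eulerian_multi_triangulation_def directed_faces_def y_def)
  have "col (vert (t0 y)) \<noteq> col (vert x)"
    using color_t0_neq[OF y(2)] vert_t1[OF y(2)] triangle_closes[OF x]
    by (simp add: y_def vert_t1 flag_closed x)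
  then have "(int (col (vert y)) - int (col (vert x))) mod 3
        = (int (col (vert (t0 y))) - int (col (vert y))) mod 3"
    and "(int (col (vert x)) - int (col (vert y))) mod 3
        = (int (col (vert y)) - int (col (vert (t0 y)))) mod 3"
    using distinct3_mod3_steps_eq color_lt_3 color_t0_neq x y flag_closed vert_y by metis+
  then show ?thesis
    using shift_edg_flag[OF x] shift_edg_flag[OF y(1)] same_direction vert_y
    by (simp add: y_def)
qed

lemma shift_edg_t1: "x \<in> F \<Longrightarrow> shift (edg (t1 x)) = shift (edg x)"
  using shift_next_on_face[of "t0 x"] t0_t0 edg_t0 flag_closed by metis

lemma shift_uniform: "\<exists>k \<in> {1, 2}. \<forall>e\<in>E. shift e = k"
proof -
  obtain x0 where x0: "x0 \<in> F"
    using gem by (auto simp: gem_embedding_def)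
  have "shift (edg x) = shift (edg x0)" if "x \<in> F" for x
  proof (rule gen_rel_rtrancl_invariant[where f = "\<lambda>x. shift (edg x)"])
    show "(x0, x) \<in> (gen_rel F [t0, t1, t2])\<^sup>*"
      using gem x0 that by (simp add: gem_embedding_def)
  qed (auto simp: edg_t0 edg_t2 shift_edg_t1)
  then have "\<forall>e\<in>E. shift e = shift (edg x0)"
    using gem by (auto simp: gem_embedding_def)
  moreover have "shift (edg x0) \<in> {1, 2}"
    using color_lt_3[OF x0] color_lt_3[OF flag_closed[THEN conjunct1, OF x0]]
      color_t0_neq[OF x0] shift_edg_flag[OF x0]
    by (auto simp: less_Suc_eq numeral_3_eq_3)
  ultimately show ?thesis by blast
qed

end

theorem lemma1:
  fixes V :: "'v set" and E :: "'e set" and src dst :: "'e \<Rightarrow> 'v"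
    and F :: "'f set" and t0 t1 t2 :: "'f \<Rightarrow> 'f" and vert :: "'f \<Rightarrow> 'v" and edg :: "'f \<Rightarrow> 'e"
    and col :: "'v \<Rightarrow> nat"
  assumes "directed_eulerian_multi_triangulation V E src dst F t0 t1 t2 vert edg"
    and "proper_3_coloring V E src dst col"
  shows "(\<forall>v w es. dwalk V E src dst v es w \<longrightarrow> (col v = col w \<longleftrightarrow> 3 dvd length es)) \<and>
         (\<forall>v es. dwalk V E src dst v es v \<longrightarrow> 3 dvd length es)"
proof -
  interpret colored_directed_triangulation V E src dst F t0 t1 t2 vert edg col
    using assms by unfold_locales
  obtain k where "k \<in> {1, 2}" "\<forall>e\<in>E. color_shift col src dst e = k"
    using shift_uniform by blast
  then have "\<forall>v w es. dwalk V E src dst v es w \<longrightarrow> (col v = col w \<longleftrightarrow> 3 dvd length es)"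
    using dwalk_same_color_iff[OF digraph coloring] by blast
  then show ?thesis by blast
qed

end
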